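(* Let $S$ be a discrete set, $N\ge 1$, and let $\{P_\theta\}_{\theta}$ be a family of probability distributions on $S^N$. Let $s^1,\dots,s^L\in S^N$ be any $L$ data points, with empirical distribution $\hat P_L(s)=\frac1L\sum_{\mu=1}^L\delta_{s,s^\mu}$. For each $i\in\{1,\dots,N\}$ define the Shannon entropy of the empirical marginal $$H_i(\hat P_L)=-\sum_{s_{-i}}\hat P_L(s_{-i})\ln \hat P_L(s_{-i}),\qquad \hat P_L(s_{-i})=\sum_{s_i}\hat P_L(s).$$ Then for every parameter $\theta$, $$\mathcal{PL}_L(\theta)-\sum_{i=1}^N H_i(\hat P_L)\;\ge\; N\,\mathcal{L}_L(\theta),$$ where $\mathcal{L}_L(\theta)=\frac1L\sum_{\mu=1}^L\log P_\theta(s^\mu)$ and $\mathcal{PL}_L(\theta)=\frac1L\sum_{\mu=1}^L\sum_{i=1}^N\log P_\theta(s^\mu_i\mid s^\mu_{-i})$.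
   Context: For $s=(s_1,\dots,s_N)$ write $s_{-i}=(s_1,\dots,s_{i-1},s_{i+1},\dots,s_N)$. The conditional distribution is $P_\theta(s_i\mid s_{-i})=P_\theta(s)/\sum_{s_i}P_\theta(s)$ (assumed well defined, i.e. the marginals $P_\theta(s_{-i})=\sum_{s_i}P_\theta(s)$ are positive where needed); $\log=\ln$ is the natural logarithm, with the convention $\log 0=-\infty$ and $0\log 0=0$. $\delta_{s,s^\mu}$ is the Kronecker delta. $\mathcal{L}_L$ is the (normalised) log-likelihood and $\mathcal{PL}_L$ the pseudo-log-likelihood. *)

theory Defs
  imports "HOL-Analysis.Analysis"
begin

text \<open>Configurations s = (s_1,...,s_N) in S^N are lists of length N over the type 'a (= S).
  Sites are indexed 0..N-1.  s_{-i} is the list with position i removed.\<close>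

definition remove_at :: "nat \<Rightarrow> 'a list \<Rightarrow> 'a list" where
  "remove_at i s = take i s @ drop (Suc i) s"

definition insert_at :: "nat \<Rightarrow> 'a \<Rightarrow> 'a list \<Rightarrow> 'a list" where
  "insert_at i a r = take i r @ a # drop i r"

definition marg :: "('a list \<Rightarrow> real) \<Rightarrow> nat \<Rightarrow> 'a list \<Rightarrow> real" where
  "marg P i r = (\<Sum>\<^sub>\<infinity>a\<in>UNIV. P (insert_at i a r))"

definition cond_prob :: "('a list \<Rightarrow> real) \<Rightarrow> nat \<Rightarrow> 'a list \<Rightarrow> real" where
  "cond_prob P i s = P s / marg P i (remove_at i s)"

definition is_distr :: "nat \<Rightarrow> ('a list \<Rightarrow> real) \<Rightarrow> bool" where
  "is_distr N P \<longleftrightarrow> (\<forall>s. length s = N \<longrightarrow> P s \<ge> 0) \<and> (P has_sum 1) {s. length s = N}"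

definition emp :: "nat \<Rightarrow> (nat \<Rightarrow> 'a list) \<Rightarrow> 'a list \<Rightarrow> real" where
  "emp L dat s = (\<Sum>\<mu><L. if s = dat \<mu> then 1 else 0) / real L"

definition eln :: "real \<Rightarrow> ereal" where
  "eln x = (if x = 0 then -\<infinity> else ereal (ln x))"

text \<open>Shannon entropy of the empirical marginal on s_{-i} (0 log 0 = 0).\<close>
definition H_marg :: "nat \<Rightarrow> nat \<Rightarrow> (nat \<Rightarrow> 'a list) \<Rightarrow> nat \<Rightarrow> real" where
  "H_marg N L dat i = - (\<Sum>\<^sub>\<infinity>r\<in>{r. length r = N - 1}.
       marg (emp L dat) i r * ln (marg (emp L dat) i r))"

definition loglik :: "nat \<Rightarrow> (nat \<Rightarrow> 'a list) \<Rightarrow> ('a list \<Rightarrow> real) \<Rightarrow> ereal" where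
  "loglik L dat P = ereal (1 / real L) * (\<Sum>\<mu><L. eln (P (dat \<mu>)))"

definition pseudologlik :: "nat \<Rightarrow> nat \<Rightarrow> (nat \<Rightarrow> 'a list) \<Rightarrow> ('a list \<Rightarrow> real) \<Rightarrow> ereal" where
  "pseudologlik N L dat P =
     ereal (1 / real L) * (\<Sum>\<mu><L. \<Sum>i<N. eln (cond_prob P i (dat \<mu>)))"

end

theory Submission
  imports Defs
begin

text \<open>For each site i, the pseudo-likelihood term ln P(s | s_{-i}) equals ln P(s) - ln P(s_{-i}),
  so the claim reduces to the site-wise inequality
  (1/L) sum_mu ln P(s^mu_{-i}) \<le> (1/L) sum_mu ln P_L(s^mu_{-i}) = -H_i.
  This is Gibbs' inequality: the empirical marginal maximises the average log-likelihood of the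
  sample among all (sub-)probability weights, which follows from ln t \<le> t - 1.
  If some data point has probability 0, the log-likelihood is -\<infinity> and there is nothing to prove.\<close>

lemma remove_insert_at: "i \<le> length r \<Longrightarrow> remove_at i (insert_at i a r) = r"
  by (simp add: remove_at_def insert_at_def)

lemma nth_insert_at: "i \<le> length r \<Longrightarrow> insert_at i a r ! i = a"
  by (simp add: insert_at_def nth_append)

lemma length_insert_at: "length (insert_at i a r) = Suc (length r)"
  by (simp add: insert_at_def)

lemma insert_remove_at: "i < length s \<Longrightarrow> insert_at i (s ! i) (remove_at i s) = s"
  by (simp add: remove_at_def insert_at_def min_def id_take_nth_drop[symmetric])

lemma length_remove_at: "i < length s \<Longrightarrow> length (remove_at i s) = length s - 1"
  by (simp add: remove_at_def)

lemma insert_at_eq_iff: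
  "i \<le> length r \<Longrightarrow> i < length s \<Longrightarrow> insert_at i a r = s \<longleftrightarrow> a = s ! i \<and> r = remove_at i s"
  by (metis nth_insert_at insert_remove_at remove_insert_at)

lemma inj_on_insert_at: "inj_on (\<lambda>(r, a). insert_at i a r) {(r, a). i \<le> length r}"
  by (rule inj_onI) (metis (mono_tags, lifting) case_prodE mem_Collect_eq prod.simps(2)
      nth_insert_at remove_insert_at)

lemma ln_diff_le_divide_minus_one:
  fixes x y :: real
  assumes "x > 0" and "y > 0"
  shows "ln x - ln y \<le> x / y - 1"
  using ln_le_minus_one[of "x / y"] ln_divide_pos[OF assms] assms by simp

lemma sum_lessThan_group_by:
  fixes x :: "nat \<Rightarrow> 'x" and g :: "'x \<Rightarrow> 'b::comm_semiring_1"
  shows "(\<Sum>\<mu><L. g (x \<mu>)) = (\<Sum>r\<in>x ` {..<L}. of_nat (card {\<mu>\<in>{..<L}. x \<mu> = r}) * g r)"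
proof -
  have "(\<Sum>\<mu><L. g (x \<mu>)) = (\<Sum>r\<in>x ` {..<L}. \<Sum>\<mu>\<in>{\<mu>\<in>{..<L}. x \<mu> = r}. g (x \<mu>))"
    by (rule sum.group[of "{..<L}" "x ` {..<L}" x "\<lambda>\<mu>. g (x \<mu>)", symmetric]) auto
  also have "\<dots> = (\<Sum>r\<in>x ` {..<L}. of_nat (card {\<mu>\<in>{..<L}. x \<mu> = r}) * g r)"
    by (intro sum.cong) auto
  finally show ?thesis .
qed

lemma card_sample_fiber_pos: "(\<mu>::nat) < L \<Longrightarrow> card {\<nu>\<in>{..<L}. x \<nu> = x \<mu>} > 0"
  by (auto simp: card_gt_0_iff finite_nat_set_iff_bounded)

lemma empirical_gibbs_inequality:
  fixes x :: "nat \<Rightarrow> 'x" and q :: "'x \<Rightarrow> real"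
  assumes q_sum: "(\<Sum>r\<in>x ` {..<L}. q r) \<le> 1"
    and q_pos: "\<And>\<mu>. \<mu> < L \<Longrightarrow> q (x \<mu>) > 0"
  shows "(\<Sum>\<mu><L. ln (q (x \<mu>))) \<le> (\<Sum>\<mu><L. ln (card {\<nu>\<in>{..<L}. x \<nu> = x \<mu>} / L))"
proof -
  define c where "c r = real (card {\<nu>\<in>{..<L}. x \<nu> = r})" for r
  have c_pos: "\<And>\<mu>. \<mu> < L \<Longrightarrow> c (x \<mu>) > 0"
    unfolding c_def of_nat_0_less_iff by (rule card_sample_fiber_pos)
  have "(\<Sum>\<mu><L. ln (q (x \<mu>)) - ln (c (x \<mu>) / L)) \<le> (\<Sum>\<mu><L. q (x \<mu>) / (c (x \<mu>) / L) - 1)"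
  proof (rule sum_mono)
    fix \<mu> assume "\<mu> \<in> {..<L}"
    then have "q (x \<mu>) > 0" "c (x \<mu>) / L > 0"
      using q_pos c_pos by auto
    then show "ln (q (x \<mu>)) - ln (c (x \<mu>) / L) \<le> q (x \<mu>) / (c (x \<mu>) / L) - 1"
      by (rule ln_diff_le_divide_minus_one)
  qed
  also have "\<dots> = (\<Sum>r\<in>x ` {..<L}. c r * (q r / (c r / L))) - L"
    using sum_lessThan_group_by[where g = "\<lambda>r. q r / (c r / L)" and x = x and L = L]
    by (simp add: sum_subtractf c_def)
  also have "\<dots> = L * (\<Sum>r\<in>x ` {..<L}. q r) - L"
    using c_pos by (force simp: sum_distrib_left intro!: sum.cong)
  also have "\<dots> \<le> 0"
    using q_sum by (simp add: mult_left_le)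
  finally show ?thesis
    by (simp add: sum_subtractf c_def)
qed

lemma marg_emp:
  assumes "\<And>\<mu>. \<mu> < L \<Longrightarrow> length (dat \<mu>) = Suc (length r)" and "i \<le> length r"
  shows "marg (emp L dat) i r = card {\<mu>\<in>{..<L}. remove_at i (dat \<mu>) = r} / L"
proof -
  define A where "A = (\<lambda>\<mu>. dat \<mu> ! i) ` {..<L}"
  have insert_eq: "\<And>\<mu> a. \<mu> < L \<Longrightarrow>
      insert_at i a r = dat \<mu> \<longleftrightarrow> a = dat \<mu> ! i \<and> r = remove_at i (dat \<mu>)"
    using assms by (intro insert_at_eq_iff) auto
  have "marg (emp L dat) i r = (\<Sum>\<^sub>\<infinity>a\<in>A. emp L dat (insert_at i a r))"
    unfolding marg_def
    by (rule infsum_cong_neutral)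
      (auto simp: emp_def A_def insert_eq intro!: sum.neutral)
  also have "\<dots> = (\<Sum>a\<in>A. emp L dat (insert_at i a r))"
    by (simp add: A_def)
  also have "\<dots> = (\<Sum>\<mu><L. \<Sum>a\<in>A. if insert_at i a r = dat \<mu> then 1 else 0) / L"
    unfolding emp_def sum_divide_distrib[symmetric] by (subst sum.swap) simp
  also have "\<dots> = (\<Sum>\<mu><L. if remove_at i (dat \<mu>) = r then 1 else 0) / L"
    by (intro arg_cong2[where f = "(/)"] sum.cong)
      (auto simp: insert_eq A_def if_distrib cong: if_cong)
  also have "\<dots> = card {\<mu>\<in>{..<L}. remove_at i (dat \<mu>) = r} / L"
    by (simp add: sum.If_cases Int_def)
  finally show ?thesis .
qed

lemma sum_marg_le_one:
  assumes P: "is_distr N P" and "finite R" and R_len: "\<And>r. r \<in> R \<Longrightarrow> length r = N - 1"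
    and "i < N"
  shows "(\<Sum>r\<in>R. marg P i r) \<le> 1"
proof -
  define g :: "'a list \<times> 'a \<Rightarrow> 'a list" where "g = (\<lambda>(r, a). insert_at i a r)"
  have P_nonneg: "\<And>s. length s = N \<Longrightarrow> P s \<ge> 0" and P_sum: "(P has_sum 1) {s. length s = N}"
    using P by (auto simp: is_distr_def)
  have inj: "inj_on g (R \<times> UNIV)"
    unfolding g_def
    by (rule inj_on_subset[OF inj_on_insert_at]) (use R_len \<open>i < N\<close> in auto)
  have image: "g ` (R \<times> UNIV) \<subseteq> {s. length s = N}"
    using R_len \<open>i < N\<close> by (auto simp: g_def length_insert_at)
  have summable: "P summable_on {s. length s = N}"
    using P_sum by (auto simp: summable_on_def)
  have summable_image: "P summable_on g ` (R \<times> UNIV)"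
    by (rule summable_on_subset_banach[OF summable image])
  then have summable_Sigma: "(P \<circ> g) summable_on R \<times> UNIV"
    using summable_on_reindex[OF inj] by blast
  have "(\<Sum>r\<in>R. marg P i r) = (\<Sum>\<^sub>\<infinity>r\<in>R. \<Sum>\<^sub>\<infinity>a\<in>UNIV. (P \<circ> g) (r, a))"
    using \<open>finite R\<close> by (simp add: marg_def g_def)
  also have "\<dots> = (\<Sum>\<^sub>\<infinity>x\<in>R \<times> UNIV. (P \<circ> g) x)"
    using infsum_Sigma_banach[OF summable_Sigma] by (simp add: comp_def)
  also have "\<dots> = (\<Sum>\<^sub>\<infinity>s\<in>g ` (R \<times> UNIV). P s)"
    by (rule infsum_reindex[OF inj, symmetric])
  also have "\<dots> \<le> (\<Sum>\<^sub>\<infinity>s\<in>{s. length s = N}. P s)"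
    using image P_nonneg by (intro infsum_mono_neutral[OF summable_image summable]) auto
  also have "\<dots> = 1"
    using P_sum by (rule infsumI)
  finally show ?thesis .
qed

lemma marg_emp_at_sample:
  assumes "\<And>\<mu>. \<mu> < L \<Longrightarrow> length (dat \<mu>) = N" and "i < N" and "\<mu> < L"
  shows "marg (emp L dat) i (remove_at i (dat \<mu>))
    = card {\<nu>\<in>{..<L}. remove_at i (dat \<nu>) = remove_at i (dat \<mu>)} / L"
  using assms by (intro marg_emp) (auto simp: length_remove_at)

lemma H_marg_eq_sample_average:
  assumes len: "\<And>\<mu>. \<mu> < L \<Longrightarrow> length (dat \<mu>) = N" and "i < N"
  shows "H_marg N L dat i = - (\<Sum>\<mu><L. ln (marg (emp L dat) i (remove_at i (dat \<mu>)))) / L"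
proof -
  define x where "x \<mu> = remove_at i (dat \<mu>)" for \<mu>
  define R where "R = x ` {..<L}"
  define f where "f r = card {\<mu>\<in>{..<L}. x \<mu> = r} / L * ln (card {\<mu>\<in>{..<L}. x \<mu> = r} / L)"
    for r
  have marg_eq: "marg (emp L dat) i r = card {\<mu>\<in>{..<L}. x \<mu> = r} / L" if "length r = N - 1" for r
    unfolding x_def using that len \<open>i < N\<close> by (intro marg_emp) auto
  have "(\<Sum>\<^sub>\<infinity>r\<in>{r. length r = N - 1}. marg (emp L dat) i r * ln (marg (emp L dat) i r))
      = (\<Sum>\<^sub>\<infinity>r\<in>R. f r)"
    using len \<open>i < N\<close>
    by (intro infsum_cong_neutral) (auto simp: marg_eq f_def R_def x_def length_remove_at)
  also have "\<dots> = (\<Sum>r\<in>R. real (card {\<mu>\<in>{..<L}. x \<mu> = r}) * (ln (card {\<mu>\<in>{..<L}. x \<mu> = r} / L) / L))"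
    by (simp add: R_def f_def)
  also have "\<dots> = (\<Sum>\<mu><L. ln (card {\<nu>\<in>{..<L}. x \<nu> = x \<mu>} / L) / L)"
    unfolding R_def by (rule sum_lessThan_group_by[symmetric])
  also have "\<dots> = (\<Sum>\<mu><L. ln (marg (emp L dat) i (remove_at i (dat \<mu>)))) / L"
    using len \<open>i < N\<close>
    by (simp add: sum_divide_distrib x_def marg_emp_at_sample)
  finally show ?thesis
    unfolding H_marg_def by simp
qed

lemma sum_ln_marg_le_emp:
  assumes P: "is_distr N P" and len: "\<And>\<mu>. \<mu> < L \<Longrightarrow> length (dat \<mu>) = N" and "i < N"
    and pos: "\<And>\<mu>. \<mu> < L \<Longrightarrow> marg P i (remove_at i (dat \<mu>)) > 0"
  shows "(\<Sum>\<mu><L. ln (marg P i (remove_at i (dat \<mu>))))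
    \<le> (\<Sum>\<mu><L. ln (marg (emp L dat) i (remove_at i (dat \<mu>))))"
proof -
  have "(\<Sum>r\<in>(\<lambda>\<mu>. remove_at i (dat \<mu>)) ` {..<L}. marg P i r) \<le> 1"
    using len \<open>i < N\<close> by (intro sum_marg_le_one[OF P]) (auto simp: length_remove_at)
  from empirical_gibbs_inequality[OF this pos]
  show ?thesis
    using len \<open>i < N\<close> by (simp add: marg_emp_at_sample)
qed

lemma eln_pos: "x > 0 \<Longrightarrow> eln x = ereal (ln x)"
  by (simp add: eln_def)

lemma loglik_eq_MInf:
  assumes "\<mu> < L" and "P (dat \<mu>) = 0"
  shows "loglik L dat P = -\<infinity>"
proof -
  have "(\<Sum>\<nu>\<in>{..<L} - {\<mu>}. eln (P (dat \<nu>))) \<noteq> \<infinity>"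
    by (simp add: sum_Pinfty eln_def)
  then have "(\<Sum>\<nu><L. eln (P (dat \<nu>))) = -\<infinity>"
    using assms by (simp add: sum.remove eln_def)
  then show ?thesis
    using assms by (simp add: loglik_def)
qed

lemma loglik_eq_real:
  assumes "\<And>\<mu>. \<mu> < L \<Longrightarrow> P (dat \<mu>) > 0"
  shows "loglik L dat P = ereal ((\<Sum>\<mu><L. ln (P (dat \<mu>))) / L)"
proof -
  have "(\<Sum>\<mu><L. eln (P (dat \<mu>))) = (\<Sum>\<mu><L. ereal (ln (P (dat \<mu>))))"
    using assms by (intro sum.cong) (auto simp: eln_pos)
  then show ?thesis
    by (simp add: loglik_def)
qed

lemma pseudologlik_eq_real:
  assumes "\<And>\<mu>. \<mu> < L \<Longrightarrow> P (dat \<mu>) > 0"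
    and "\<And>\<mu> i. \<mu> < L \<Longrightarrow> i < N \<Longrightarrow> marg P i (remove_at i (dat \<mu>)) > 0"
  shows "pseudologlik N L dat P
    = ereal ((\<Sum>\<mu><L. \<Sum>i<N. ln (P (dat \<mu>)) - ln (marg P i (remove_at i (dat \<mu>)))) / L)"
proof -
  have "(\<Sum>\<mu><L. \<Sum>i<N. eln (cond_prob P i (dat \<mu>)))
      = (\<Sum>\<mu><L. \<Sum>i<N. ereal (ln (P (dat \<mu>)) - ln (marg P i (remove_at i (dat \<mu>)))))"
    using assms by (intro sum.cong) (auto simp: cond_prob_def eln_pos ln_divide_pos)
  then show ?thesis
    by (simp add: pseudologlik_def)
qed

theorem mainTheorem1:
  fixes Pfam :: "'b \<Rightarrow> 'a list \<Rightarrow> real"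
    and dat :: "nat \<Rightarrow> 'a list"
    and N L :: nat
    and \<theta> :: 'b
  assumes "N \<ge> 1" and "L \<ge> 1"
    and "\<And>\<theta>. is_distr N (Pfam \<theta>)"
    and "\<And>\<mu>. \<mu> < L \<Longrightarrow> length (dat \<mu>) = N"
    and "\<And>\<mu> i. \<mu> < L \<Longrightarrow> i < N \<Longrightarrow> marg (Pfam \<theta>) i (remove_at i (dat \<mu>)) > 0"
  shows "pseudologlik N L dat (Pfam \<theta>) - ereal (\<Sum>i<N. H_marg N L dat i)
           \<ge> ereal (real N) * loglik L dat (Pfam \<theta>)"
proof (cases "\<exists>\<mu><L. Pfam \<theta> (dat \<mu>) = 0")
  case True
  then show ?thesis
    using loglik_eq_MInf \<open>N \<ge> 1\<close> by fastforce
next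
  case False
  define q where "q i \<mu> = marg (Pfam \<theta>) i (remove_at i (dat \<mu>))" for i \<mu>
  define m where "m i \<mu> = marg (emp L dat) i (remove_at i (dat \<mu>))" for i \<mu>
  have P_pos: "\<And>\<mu>. \<mu> < L \<Longrightarrow> Pfam \<theta> (dat \<mu>) > 0"
    using False assms(3,4) by (force simp: is_distr_def order_le_less)
  have H: "(\<Sum>i<N. H_marg N L dat i) = - (\<Sum>i<N. \<Sum>\<mu><L. ln (m i \<mu>)) / L"
    using H_marg_eq_sample_average[OF assms(4)]
    by (simp add: m_def sum_negf sum_divide_distrib)
  have "(\<Sum>i<N. \<Sum>\<mu><L. ln (q i \<mu>)) \<le> (\<Sum>i<N. \<Sum>\<mu><L. ln (m i \<mu>))"
    unfolding q_def m_def using assms(3-5)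
    by (intro sum_mono sum_ln_marg_le_emp[where N = N and L = L]) auto
  moreover have "(\<Sum>\<mu><L. \<Sum>i<N. ln (Pfam \<theta> (dat \<mu>)) - ln (q i \<mu>))
      = N * (\<Sum>\<mu><L. ln (Pfam \<theta> (dat \<mu>))) - (\<Sum>i<N. \<Sum>\<mu><L. ln (q i \<mu>))"
    by (simp add: sum_subtractf sum_distrib_left sum.swap[of _ "{..<N}"])
  ultimately have "(\<Sum>\<mu><L. \<Sum>i<N. ln (Pfam \<theta> (dat \<mu>)) - ln (q i \<mu>)) / L
      - (\<Sum>i<N. H_marg N L dat i) \<ge> N * ((\<Sum>\<mu><L. ln (Pfam \<theta> (dat \<mu>))) / L)"
    using \<open>L \<ge> 1\<close> unfolding H by (simp add: field_simps)
  then show ?thesis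
    using P_pos assms(5) by (simp add: loglik_eq_real pseudologlik_eq_real q_def)
qed

end
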